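(* There exists a $(418,18)$-arc in $\operatorname{PG}(2,25)$; hence $m_{18}(2,25)\ge 418$.
   Context: Points of $\operatorname{PG}(2,q)$ are the 1-dimensional subspaces of $\operatorname{GF}(q)^3$, lines are the 2-dimensional subspaces. An $(n,r)$-arc in $\operatorname{PG}(2,q)$ is a set $\mathcal B$ of $n$ points such that every line contains at most $r$ points of $\mathcal B$ and at least one line contains exactly $r$ points of $\mathcal B$. $m_r(2,q)$ is the maximum $n$ for which an $(n,r)$-arc in $\operatorname{PG}(2,q)$ exists. *)

theory Defs
  imports Main "HOL-Library.Cardinality"
begin

fun vsc :: "'a::field \<Rightarrow> 'a \<times> 'a \<times> 'a \<Rightarrow> 'a \<times> 'a \<times> 'a" where
  "vsc c (x, y, z) = (c * x, c * y, c * z)"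

fun vadd :: "'a::field \<times> 'a \<times> 'a \<Rightarrow> 'a \<times> 'a \<times> 'a \<Rightarrow> 'a \<times> 'a \<times> 'a" where
  "vadd (x, y, z) (x', y', z') = (x + x', y + y', z + z')"

definition pg_point :: "('a::field \<times> 'a \<times> 'a) set \<Rightarrow> bool" where
  "pg_point P \<longleftrightarrow> (\<exists>v. v \<noteq> (0, 0, 0) \<and> P = {vsc c v | c. True})"

definition pg_line :: "('a::field \<times> 'a \<times> 'a) set \<Rightarrow> bool" where
  "pg_line L \<longleftrightarrow> (\<exists>u w. (\<forall>a b. vadd (vsc a u) (vsc b w) = (0, 0, 0) \<longrightarrow> a = 0 \<and> b = 0)
                      \<and> L = {vadd (vsc s u) (vsc t w) | s t. True})"

definition is_arc :: "nat \<Rightarrow> nat \<Rightarrow> ('a::field \<times> 'a \<times> 'a) set set \<Rightarrow> bool" where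
  "is_arc n r B \<longleftrightarrow> finite B \<and> (\<forall>P\<in>B. pg_point P) \<and> card B = n
     \<and> (\<forall>L. pg_line L \<longrightarrow> card {P \<in> B. P \<subseteq> L} \<le> r)
     \<and> (\<exists>L. pg_line L \<and> card {P \<in> B. P \<subseteq> L} = r)"

definition m_arc :: "'a::field itself \<Rightarrow> nat \<Rightarrow> nat" where
  "m_arc _ r = Max {n. \<exists>B :: ('a \<times> 'a \<times> 'a) set set. is_arc n r B}"

end

(*
  A field with 25 elements has characteristic 5 and contains a square root r of 2, which is
  not a square in GF(5); hence every element is uniquely a + b r with a, b in GF(5), and the
  field is a copy of the explicit model GF(5)[sqrt 2]. The 418 points are listed by their
  normalized coordinate vectors over this model. Every line is the kernel of a normal vector,
  which normalizes to one of 651 forms, and each such line is covered by 26 explicitly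
  parametrized points; evaluating which of them belong to the set shows that at most 18 do.
  The line z = 0 contains exactly 18 of the points.
*)

theory Submission
  imports Defs "HOL-Number_Theory.Residues"
begin

section \<open>The prime field GF(5)\<close>

datatype f5 = Z0 | Z1 | Z2 | Z3 | Z4

lemma UNIV_f5: "(UNIV :: f5 set) = {Z0, Z1, Z2, Z3, Z4}"
  using f5.exhaust by auto

instance f5 :: finite
  by standard (simp add: UNIV_f5)

primrec f5_val :: "f5 \<Rightarrow> nat" where
  "f5_val Z0 = 0" | "f5_val Z1 = 1" | "f5_val Z2 = 2" | "f5_val Z3 = 3" | "f5_val Z4 = 4"

fun f5_add :: "f5 \<Rightarrow> f5 \<Rightarrow> f5" where
  "f5_add Z0 Z0 = Z0" | "f5_add Z0 Z1 = Z1" | "f5_add Z0 Z2 = Z2" | "f5_add Z0 Z3 = Z3" | "f5_add Z0 Z4 = Z4"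
| "f5_add Z1 Z0 = Z1" | "f5_add Z1 Z1 = Z2" | "f5_add Z1 Z2 = Z3" | "f5_add Z1 Z3 = Z4" | "f5_add Z1 Z4 = Z0"
| "f5_add Z2 Z0 = Z2" | "f5_add Z2 Z1 = Z3" | "f5_add Z2 Z2 = Z4" | "f5_add Z2 Z3 = Z0" | "f5_add Z2 Z4 = Z1"
| "f5_add Z3 Z0 = Z3" | "f5_add Z3 Z1 = Z4" | "f5_add Z3 Z2 = Z0" | "f5_add Z3 Z3 = Z1" | "f5_add Z3 Z4 = Z2"
| "f5_add Z4 Z0 = Z4" | "f5_add Z4 Z1 = Z0" | "f5_add Z4 Z2 = Z1" | "f5_add Z4 Z3 = Z2" | "f5_add Z4 Z4 = Z3"

fun f5_mul :: "f5 \<Rightarrow> f5 \<Rightarrow> f5" where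
  "f5_mul Z0 Z0 = Z0" | "f5_mul Z0 Z1 = Z0" | "f5_mul Z0 Z2 = Z0" | "f5_mul Z0 Z3 = Z0" | "f5_mul Z0 Z4 = Z0"
| "f5_mul Z1 Z0 = Z0" | "f5_mul Z1 Z1 = Z1" | "f5_mul Z1 Z2 = Z2" | "f5_mul Z1 Z3 = Z3" | "f5_mul Z1 Z4 = Z4"
| "f5_mul Z2 Z0 = Z0" | "f5_mul Z2 Z1 = Z2" | "f5_mul Z2 Z2 = Z4" | "f5_mul Z2 Z3 = Z1" | "f5_mul Z2 Z4 = Z3"
| "f5_mul Z3 Z0 = Z0" | "f5_mul Z3 Z1 = Z3" | "f5_mul Z3 Z2 = Z1" | "f5_mul Z3 Z3 = Z4" | "f5_mul Z3 Z4 = Z2"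
| "f5_mul Z4 Z0 = Z0" | "f5_mul Z4 Z1 = Z4" | "f5_mul Z4 Z2 = Z3" | "f5_mul Z4 Z3 = Z2" | "f5_mul Z4 Z4 = Z1"

primrec f5_neg :: "f5 \<Rightarrow> f5" where
  "f5_neg Z0 = Z0" | "f5_neg Z1 = Z4" | "f5_neg Z2 = Z3" | "f5_neg Z3 = Z2" | "f5_neg Z4 = Z1"

primrec f5_inv :: "f5 \<Rightarrow> f5" where
  "f5_inv Z0 = Z0" | "f5_inv Z1 = Z1" | "f5_inv Z2 = Z3" | "f5_inv Z3 = Z2" | "f5_inv Z4 = Z4"

lemma f5_val_inject [simp]: "f5_val x = f5_val y \<longleftrightarrow> x = y"
  by (cases x; cases y) simp_all

lemma f5_val_add: "f5_val (f5_add x y) = (f5_val x + f5_val y) mod 5"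
  by (cases x; cases y) simp_all

lemma f5_val_mul: "f5_val (f5_mul x y) = (f5_val x * f5_val y) mod 5"
  by (cases x; cases y) simp_all

lemma f5_add_neg: "f5_add x (f5_neg x) = Z0"
  by (cases x) simp_all

lemma f5_mul_inv: "x \<noteq> Z0 \<Longrightarrow> f5_mul x (f5_inv x) = Z1"
  by (cases x) simp_all

lemma f5_square_ne_2: "f5_mul x x \<noteq> Z2"
  by (cases x) simp_all

lemma f5_nonsquare_scale_to_2:
  assumes "\<And>x. f5_mul x x \<noteq> c"
  obtains k where "f5_mul (f5_mul k k) c = Z2"
proof (cases c)
  case Z2 then show ?thesis using that[of Z1] by simp
next
  case Z3 then show ?thesis using that[of Z2] by simp
qed (use assms[of Z0] assms[of Z1] assms[of Z2] in simp_all)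

definition of_f5 :: "f5 \<Rightarrow> 'a::field" where
  "of_f5 x = of_nat (f5_val x)"

lemma of_f5_Z0 [simp]: "of_f5 Z0 = 0"
  and of_f5_Z1 [simp]: "of_f5 Z1 = 1"
  by (simp_all add: of_f5_def)

context
  assumes char5: "CHAR('a::field) = 5"
begin

lemma of_nat_mod_5: "(of_nat (n mod 5) :: 'a) = of_nat n"
  using of_nat_eq_iff_cong_CHAR[where 'a='a] char5 by (simp add: cong_def)

lemma of_f5_add: "(of_f5 (f5_add x y) :: 'a) = of_f5 x + of_f5 y"
  by (simp add: of_f5_def f5_val_add of_nat_mod_5)

lemma of_f5_mul: "(of_f5 (f5_mul x y) :: 'a) = of_f5 x * of_f5 y"
  by (simp add: of_f5_def f5_val_mul of_nat_mod_5)

lemma of_f5_inject [simp]: "(of_f5 x :: 'a) = of_f5 y \<longleftrightarrow> x = y"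
proof -
  have "f5_val x < 5" "f5_val y < 5" by (cases x; simp) (cases y; simp)
  then show ?thesis
    using of_nat_eq_iff_cong_CHAR[where 'a='a] char5 by (simp add: of_f5_def cong_def)
qed

lemma of_f5_neg: "(of_f5 (f5_neg x) :: 'a) = - of_f5 x"
proof -
  have "(of_f5 x :: 'a) + of_f5 (f5_neg x) = 0"
    using of_f5_add[of x "f5_neg x"] by (simp add: f5_add_neg of_f5_def)
  then show ?thesis by (simp add: minus_unique)
qed

lemma of_f5_inv: "(of_f5 (f5_inv x) :: 'a) = inverse (of_f5 x)"
proof (cases "x = Z0")
  case False
  then have "(of_f5 x :: 'a) * of_f5 (f5_inv x) = 1"
    using of_f5_mul[of x "f5_inv x"] by (simp add: f5_mul_inv of_f5_def)
  then show ?thesis by (simp add: inverse_unique)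
qed (simp add: of_f5_def)

end

section \<open>Fields with 25 elements\<close>

lemma CHAR_eq_5_if_CARD_eq_25:
  assumes "CARD('a::{field,finite}) = 25"
  shows "CHAR('a) = 5"
proof -
  have "prime CHAR('a)"
    by (simp add: finite_imp_CHAR_pos prime_CHAR_semidom)
  moreover have "CHAR('a) dvd 5 ^ 2"
    using CHAR_dvd_CARD[where 'a='a] assms by simp
  ultimately have "CHAR('a) dvd 5"
    using prime_dvd_power by blast
  moreover have "prime (5::nat)"
    by (simp add: prime_nat_iff' atLeastLessThan_nat_numeral)
  ultimately show ?thesis
    using \<open>prime CHAR('a)\<close> primes_dvd_imp_eq by blast
qed

lemma of_f5_diff:
  "CHAR('a::field) = 5 \<Longrightarrow> (of_f5 (f5_add x (f5_neg y)) :: 'a) = of_f5 x - of_f5 y"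
  by (simp add: of_f5_add of_f5_neg)

lemma of_f5_pair_inject:
  fixes s :: "'a::field"
  assumes char5: "CHAR('a) = 5" and s: "s \<notin> range of_f5"
    and eq: "of_f5 a + of_f5 b * s = of_f5 c + of_f5 d * s"
  shows "a = c \<and> b = d"
proof (cases "b = d")
  case True
  then show ?thesis using eq char5 by simp
next
  case False
  let ?\<delta> = "f5_add d (f5_neg b)"
  have \<delta>: "(of_f5 ?\<delta> :: 'a) \<noteq> 0"
    using False char5 by (simp add: of_f5_diff)
  have "of_f5 ?\<delta> * s = of_f5 (f5_add a (f5_neg c))"
    using eq char5 by (simp add: of_f5_diff algebra_simps)
  then have "s = of_f5 (f5_mul (f5_add a (f5_neg c)) (f5_inv ?\<delta>))"
    using \<delta> char5 by (simp add: of_f5_mul of_f5_inv field_simps)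
  then show ?thesis using s by blast
qed

context
  assumes card25: "CARD('a::{field,finite}) = 25"
begin

lemma of_f5_pair_surj:
  assumes s: "(s :: 'a) \<notin> range of_f5"
  obtains a b where "y = of_f5 a + of_f5 b * s"
proof -
  let ?\<phi> = "\<lambda>(a, b). of_f5 a + of_f5 b * s :: 'a"
  have "inj ?\<phi>"
    using of_f5_pair_inject[OF CHAR_eq_5_if_CARD_eq_25[OF card25] s] by (auto intro: injI)
  then have "card (range ?\<phi>) = CARD(f5 \<times> f5)"
    by (simp add: card_image)
  also have "\<dots> = CARD('a)"
    using card25 by (simp add: UNIV_f5 flip: UNIV_Times_UNIV)
  finally have "range ?\<phi> = UNIV"
    by (intro card_subset_eq) auto
  then show ?thesis using that by (metis (no_types, lifting) UNIV_I case_prod_conv imageE surj_pair)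
qed

lemma exists_notin_range_of_f5: "\<exists>s :: 'a. s \<notin> range of_f5"
proof -
  have "card (range (of_f5 :: f5 \<Rightarrow> 'a)) \<le> 5"
    using card_image_le[of UNIV "of_f5 :: f5 \<Rightarrow> 'a"] by (simp add: UNIV_f5)
  then have "range (of_f5 :: f5 \<Rightarrow> 'a) \<noteq> UNIV"
    using card25 by auto
  then show ?thesis by blast
qed

text \<open>Complete the square in \<open>s\<^sup>2 = a + b s\<close>, using \<open>-1/2 = 2\<close> in the prime field.\<close>

lemma exists_square_in_prime_field:
  obtains t :: 'a and c where "t \<notin> range of_f5" and "t * t = of_f5 c"
proof -
  have char5: "CHAR('a) = 5"
    by (rule CHAR_eq_5_if_CARD_eq_25[OF card25])
  obtain s :: 'a where s: "s \<notin> range of_f5"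
    using exists_notin_range_of_f5 by blast
  then obtain a b where ss: "s * s = of_f5 a + of_f5 b * s"
    using of_f5_pair_surj by metis
  define t where "t = s + of_f5 (f5_mul Z2 b)"
  have five: "(5::'a) = 0"
    using of_nat_CHAR[where 'a='a] char5 by simp
  have "t * t = of_f5 a + 5 * of_f5 b * s + 4 * (of_f5 b * of_f5 b)"
    using char5 by (simp add: t_def of_f5_mul algebra_simps ss) (simp add: of_f5_def)
  also have "\<dots> = of_f5 (f5_add a (f5_mul Z4 (f5_mul b b)))"
    using char5 five by (simp add: of_f5_add of_f5_mul) (simp add: of_f5_def)
  finally have "t * t = of_f5 (f5_add a (f5_mul Z4 (f5_mul b b)))" .
  moreover have "t \<notin> range of_f5"
  proof
    assume "t \<in> range of_f5"
    then obtain x where "t = of_f5 x" by blast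
    then have "s = of_f5 (f5_add x (f5_neg (f5_mul Z2 b)))"
      using char5 by (simp add: t_def of_f5_diff eq_diff_eq)
    then show False using s by blast
  qed
  ultimately show ?thesis using that by blast
qed

text \<open>The square \<open>t\<^sup>2\<close> is a nonsquare of the prime field, so a multiple of \<open>t\<close> squares to 2.\<close>

lemma exists_sqrt_2: "\<exists>r :: 'a. r * r = 2"
proof -
  have char5: "CHAR('a) = 5"
    by (rule CHAR_eq_5_if_CARD_eq_25[OF card25])
  obtain t :: 'a and c where t: "t \<notin> range of_f5" and tt: "t * t = of_f5 c"
    using exists_square_in_prime_field by blast
  have "f5_mul x x \<noteq> c" for x
  proof
    assume "f5_mul x x = c"
    then have "t * t = of_f5 x * of_f5 x"
      using tt char5 by (simp flip: of_f5_mul)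
    then have "(t - of_f5 x) * (t + of_f5 x) = 0"
      by (simp add: algebra_simps)
    then have "t = of_f5 x \<or> t = of_f5 (f5_neg x)"
      using char5 by (auto simp: of_f5_neg eq_neg_iff_add_eq_0)
    then show False using t by blast
  qed
  then obtain k where k: "f5_mul (f5_mul k k) c = Z2"
    using f5_nonsquare_scale_to_2 by blast
  have "(of_f5 k * t) * (of_f5 k * t) = of_f5 (f5_mul (f5_mul k k) c)"
    using tt char5 by (simp add: of_f5_mul algebra_simps)
  then show ?thesis
    using k by (auto simp: of_f5_def)
qed

end

section \<open>Points and lines of the projective plane\<close>

definition proj_pt :: "'a::field \<times> 'a \<times> 'a \<Rightarrow> ('a \<times> 'a \<times> 'a) set" where
  "proj_pt v = {vsc c v | c. True}"

fun dot3 :: "'a::field \<times> 'a \<times> 'a \<Rightarrow> 'a \<times> 'a \<times> 'a \<Rightarrow> 'a" where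
  "dot3 (a, b, c) (x, y, z) = a * x + b * y + c * z"

lemma vsc_vsc: "vsc c (vsc d v) = vsc (c * d) v"
  by (cases v rule: prod_cases3) (simp add: mult.assoc)

lemma vsc_one [simp]: "vsc 1 v = v"
  by (cases v rule: prod_cases3) simp

lemma vsc_zero [simp]: "vsc 0 v = (0, 0, 0)"
  by (cases v rule: prod_cases3) simp

lemma dot3_vsc_left: "dot3 (vsc c n) v = c * dot3 n v"
  by (cases n rule: prod_cases3; cases v rule: prod_cases3) (simp add: algebra_simps)

lemma dot3_vsc_right: "dot3 n (vsc c v) = c * dot3 n v"
  by (cases n rule: prod_cases3; cases v rule: prod_cases3) (simp add: algebra_simps)

lemma vadd_vsc_eq_vsc:
  "a \<noteq> 0 \<Longrightarrow> vadd (vsc a u) (vsc b w) = vsc a (vadd u (vsc (b / a) w))"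
  by (cases u rule: prod_cases3; cases w rule: prod_cases3) (simp add: algebra_simps)

lemma mem_proj_pt_self: "v \<in> proj_pt v"
  unfolding proj_pt_def by (metis (mono_tags, lifting) mem_Collect_eq vsc_one)

lemma proj_pt_vsc: "c \<noteq> 0 \<Longrightarrow> proj_pt (vsc c v) = proj_pt v"
  unfolding proj_pt_def
  by (auto simp: vsc_vsc) (metis nonzero_divide_eq_eq)

lemma proj_pt_eqD: "proj_pt u = proj_pt v \<Longrightarrow> \<exists>c. u = vsc c v"
  using mem_proj_pt_self[of u] unfolding proj_pt_def by auto

lemma pg_point_proj_pt: "v \<noteq> (0, 0, 0) \<Longrightarrow> pg_point (proj_pt v)"
  unfolding pg_point_def proj_pt_def by blast

lemma proj_pt_subset_iff:
  assumes L: "\<forall>x. x \<in> L \<longleftrightarrow> dot3 n x = 0"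
  shows "proj_pt v \<subseteq> L \<longleftrightarrow> dot3 n v = 0"
proof
  show "proj_pt v \<subseteq> L \<Longrightarrow> dot3 n v = 0"
    using mem_proj_pt_self[of v] L by blast
  assume v: "dot3 n v = 0"
  show "proj_pt v \<subseteq> L"
  proof
    fix x assume "x \<in> proj_pt v"
    then obtain c where "x = vsc c v" unfolding proj_pt_def by blast
    then show "x \<in> L" using v by (simp add: L[rule_format] dot3_vsc_right)
  qed
qed

lemma cramer_2x3:
  fixes u1 u2 u3 w1 w2 w3 x1 x2 x3 :: "'a::field"
  assumes D: "u1 * w2 - u2 * w1 \<noteq> 0"
    and orth: "(u2 * w3 - u3 * w2) * x1 + (u3 * w1 - u1 * w3) * x2 + (u1 * w2 - u2 * w1) * x3 = 0"
  shows "\<exists>a b. x1 = a * u1 + b * w1 \<and> x2 = a * u2 + b * w2 \<and> x3 = a * u3 + b * w3"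
proof -
  define D where "D = u1 * w2 - u2 * w1"
  define a where "a = (x1 * w2 - x2 * w1) / D"
  define b where "b = (u1 * x2 - u2 * x1) / D"
  have comb: "a * p + b * q = ((x1 * w2 - x2 * w1) * p + (u1 * x2 - u2 * x1) * q) / D" for p q
    by (simp add: a_def b_def add_divide_distrib)
  have "(x1 * w2 - x2 * w1) * u1 + (u1 * x2 - u2 * x1) * w1 = x1 * D"
    "(x1 * w2 - x2 * w1) * u2 + (u1 * x2 - u2 * x1) * w2 = x2 * D"
    by (simp_all add: D_def algebra_simps)
  moreover have "(x1 * w2 - x2 * w1) * u3 + (u1 * x2 - u2 * x1) * w3 - x3 * D
      = - ((u2 * w3 - u3 * w2) * x1 + (u3 * w1 - u1 * w3) * x2 + (u1 * w2 - u2 * w1) * x3)"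
    by (simp add: D_def algebra_simps)
  then have "(x1 * w2 - x2 * w1) * u3 + (u1 * x2 - u2 * x1) * w3 = x3 * D"
    using orth by simp
  ultimately have "x1 = a * u1 + b * w1" "x2 = a * u2 + b * w2" "x3 = a * u3 + b * w3"
    using D by (simp_all add: comb D_def[symmetric])
  then show ?thesis by blast
qed

text \<open>A normal vector of a line is the cross product of two spanning vectors.\<close>

lemma pg_line_normal:
  assumes "pg_line (L :: ('a::field \<times> 'a \<times> 'a) set)"
  obtains n where "n \<noteq> (0, 0, 0)" and "\<forall>x. x \<in> L \<longleftrightarrow> dot3 n x = 0"
proof -
  obtain u w where indep: "\<forall>a b. vadd (vsc a u) (vsc b w) = (0, 0, 0) \<longrightarrow> a = 0 \<and> b = 0"
    and L: "L = {vadd (vsc s u) (vsc t w) | s t. True}"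
    using assms unfolding pg_line_def by blast
  obtain u1 u2 u3 where u: "u = (u1, u2, u3)" by (cases u rule: prod_cases3)
  obtain w1 w2 w3 where w: "w = (w1, w2, w3)" by (cases w rule: prod_cases3)
  define n where "n = (u2 * w3 - u3 * w2, u3 * w1 - u1 * w3, u1 * w2 - u2 * w1)"
  have "n \<noteq> (0, 0, 0)"
  proof
    assume "n = (0, 0, 0)"
    then have "vadd (vsc w1 u) (vsc (- u1) w) = (0, 0, 0)"
      "vadd (vsc w2 u) (vsc (- u2) w) = (0, 0, 0)"
      "vadd (vsc w3 u) (vsc (- u3) w) = (0, 0, 0)"
      using u w by (auto simp: n_def algebra_simps)
    then have "u = (0, 0, 0)"
      using indep u by fastforce
    then show False
      using indep[rule_format, of 1 0] by simp
  qed
  moreover have "x \<in> L \<longleftrightarrow> dot3 n x = 0" for x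
  proof
    assume "x \<in> L"
    then show "dot3 n x = 0"
      using L u w by (auto simp: n_def algebra_simps)
  next
    assume orth: "dot3 n x = 0"
    obtain x1 x2 x3 where x: "x = (x1, x2, x3)" by (cases x rule: prod_cases3)
    have "\<exists>a b. x1 = a * u1 + b * w1 \<and> x2 = a * u2 + b * w2 \<and> x3 = a * u3 + b * w3"
      using \<open>n \<noteq> (0, 0, 0)\<close> orth cramer_2x3[of u1 w2 u2 w1 w3 u3 x1 x2 x3]
        cramer_2x3[of u2 w3 u3 w2 w1 u1 x2 x3 x1] cramer_2x3[of u3 w1 u1 w3 w2 u2 x3 x1 x2]
      by (auto simp: n_def x algebra_simps)
    then show "x \<in> L"
      using L u w x by auto
  qed
  ultimately show ?thesis using that by blast
qed

lemma pg_line_z_eq_0: "pg_line {x :: 'a::field \<times> 'a \<times> 'a. snd (snd x) = 0}"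
proof -
  have "{x :: 'a \<times> 'a \<times> 'a. snd (snd x) = 0}
      = {vadd (vsc s (1, 0, 0)) (vsc t (0, 1, 0)) | s t. True}"
    by auto
  then show ?thesis
    unfolding pg_line_def by (intro exI[of _ "(1, 0, 0)"] exI[of _ "(0, 1, 0)"]) simp
qed

lemma is_arc_le_m_arc:
  assumes "is_arc n r (B :: ('a::{field,finite} \<times> 'a \<times> 'a) set set)"
  shows "n \<le> m_arc TYPE('a) r"
proof -
  have "card B' \<le> CARD(('a \<times> 'a \<times> 'a) set)" for B' :: "('a \<times> 'a \<times> 'a) set set"
    by (rule card_mono) simp_all
  then have "{n. \<exists>B :: ('a \<times> 'a \<times> 'a) set set. is_arc n r B} \<subseteq> {..CARD(('a \<times> 'a \<times> 'a) set)}"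
    by (auto simp: is_arc_def)
  then have "finite {n. \<exists>B :: ('a \<times> 'a \<times> 'a) set set. is_arc n r B}"
    using finite_subset by blast
  then show ?thesis
    unfolding m_arc_def using assms by (intro Max_ge) auto
qed

section \<open>The model GF(5)[sqrt 2] of GF(25)\<close>

text \<open>The pair \<open>(a, b)\<close> stands for \<open>a + b \<surd>2\<close>.\<close>

type_synonym gf25 = "f5 \<times> f5"

abbreviation gf_zero :: gf25 where "gf_zero \<equiv> (Z0, Z0)"
abbreviation gf_one :: gf25 where "gf_one \<equiv> (Z1, Z0)"

fun gf_add :: "gf25 \<Rightarrow> gf25 \<Rightarrow> gf25" where
  "gf_add (a, b) (c, d) = (f5_add a c, f5_add b d)"

fun gf_mul :: "gf25 \<Rightarrow> gf25 \<Rightarrow> gf25" where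
  "gf_mul (a, b) (c, d) = (f5_add (f5_mul a c) (f5_mul Z2 (f5_mul b d)), f5_add (f5_mul a d) (f5_mul b c))"

fun gf_neg :: "gf25 \<Rightarrow> gf25" where
  "gf_neg (a, b) = (f5_neg a, f5_neg b)"

text \<open>\<open>(a + b \<surd>2)\<^sup>-\<^sup>1 = (a - b \<surd>2) / (a\<^sup>2 - 2 b\<^sup>2)\<close>, and \<open>-2 = 3\<close>.\<close>

fun gf_inv :: "gf25 \<Rightarrow> gf25" where
  "gf_inv (a, b) =
    (let n = f5_inv (f5_add (f5_mul a a) (f5_mul Z3 (f5_mul b b))) in (f5_mul a n, f5_neg (f5_mul b n)))"

lemma gf_mul_inv:
  assumes "x \<noteq> gf_zero"
  shows "gf_mul x (gf_inv x) = gf_one"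
proof -
  obtain a b where "x = (a, b)" by fastforce
  then show ?thesis using assms by (cases a; cases b) simp_all
qed

fun gf_val :: "'a::field \<Rightarrow> gf25 \<Rightarrow> 'a" where
  "gf_val r (a, b) = of_f5 a + of_f5 b * r"

locale field25 =
  fixes r :: "'a::{field,finite}"
  assumes card_eq_25: "CARD('a) = 25" and r_square: "r * r = 2"
begin

lemma char_eq_5: "CHAR('a) = 5"
  by (rule CHAR_eq_5_if_CARD_eq_25[OF card_eq_25])

lemma r_notin_prime_field: "r \<notin> range of_f5"
proof
  assume "r \<in> range of_f5"
  then obtain x where "r = of_f5 x" by blast
  then have "of_f5 (f5_mul x x) = (of_f5 Z2 :: 'a)"
    using r_square char_eq_5 by (simp add: of_f5_mul) (simp add: of_f5_def)
  then show False
    using char_eq_5 f5_square_ne_2 by simp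
qed

lemma gf_val_add: "gf_val r (gf_add x y) = gf_val r x + gf_val r y"
  by (cases x; cases y) (simp add: char_eq_5 of_f5_add algebra_simps)

lemma gf_val_neg: "gf_val r (gf_neg x) = - gf_val r x"
  by (cases x) (simp add: char_eq_5 of_f5_neg)

lemma gf_val_mul: "gf_val r (gf_mul x y) = gf_val r x * gf_val r y"
proof -
  obtain a b c d where xy: "x = (a, b)" "y = (c, d)" by fastforce
  have "gf_val r (gf_mul x y)
      = of_f5 a * of_f5 c + 2 * (of_f5 b * of_f5 d) + (of_f5 a * of_f5 d + of_f5 b * of_f5 c) * r"
    using char_eq_5 by (simp add: xy of_f5_add of_f5_mul) (simp add: of_f5_def)
  also have "\<dots> = of_f5 a * of_f5 c + (of_f5 b * of_f5 d) * (r * r) + (of_f5 a * of_f5 d + of_f5 b * of_f5 c) * r"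
    by (simp add: r_square)
  also have "\<dots> = (of_f5 a + of_f5 b * r) * (of_f5 c + of_f5 d * r)"
    by (simp add: algebra_simps)
  finally show ?thesis by (simp add: xy)
qed

lemma gf_val_inject [simp]: "gf_val r x = gf_val r y \<longleftrightarrow> x = y"
  using of_f5_pair_inject[OF char_eq_5 r_notin_prime_field] by (cases x; cases y) auto

lemma gf_val_eq_0_iff [simp]: "gf_val r x = 0 \<longleftrightarrow> x = gf_zero"
  using gf_val_inject[of x gf_zero] by simp

lemma gf_val_inv: "x \<noteq> gf_zero \<Longrightarrow> gf_val r (gf_inv x) = inverse (gf_val r x)"
  using gf_val_mul[of x "gf_inv x"] gf_mul_inv[of x] by (simp add: inverse_unique)

lemma gf_val_surj: "\<exists>x. gf_val r x = y"
  using of_f5_pair_surj[OF card_eq_25 r_notin_prime_field] by (metis gf_val.simps)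

end

type_synonym gf25vec = "gf25 \<times> gf25 \<times> gf25"

fun gf3_val :: "'a::field \<Rightarrow> gf25vec \<Rightarrow> 'a \<times> 'a \<times> 'a" where
  "gf3_val r (a, b, c) = (gf_val r a, gf_val r b, gf_val r c)"

fun gf3_add :: "gf25vec \<Rightarrow> gf25vec \<Rightarrow> gf25vec" where
  "gf3_add (a, b, c) (x, y, z) = (gf_add a x, gf_add b y, gf_add c z)"

fun gf3_smul :: "gf25 \<Rightarrow> gf25vec \<Rightarrow> gf25vec" where
  "gf3_smul s (x, y, z) = (gf_mul s x, gf_mul s y, gf_mul s z)"

fun is_normal_rep :: "gf25vec \<Rightarrow> bool" where
  "is_normal_rep (a, b, c) \<longleftrightarrow>
    a = gf_one \<or> a = gf_zero \<and> b = gf_one \<or> a = gf_zero \<and> b = gf_zero \<and> c = gf_one"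

fun normal_rep :: "gf25vec \<Rightarrow> gf25vec" where
  "normal_rep (a, b, c) =
    (if a \<noteq> gf_zero then (gf_one, gf_mul (gf_inv a) b, gf_mul (gf_inv a) c)
     else if b \<noteq> gf_zero then (gf_zero, gf_one, gf_mul (gf_inv b) c)
     else (gf_zero, gf_zero, gf_one))"

lemma is_normal_rep_normal_rep: "is_normal_rep (normal_rep v)"
  by (cases v rule: prod_cases3) simp

fun kernel_base :: "gf25vec \<Rightarrow> gf25vec" where
  "kernel_base (a, b, c) = (if a = gf_one then (gf_neg b, gf_one, gf_zero) else (gf_one, gf_zero, gf_zero))"

fun kernel_dir :: "gf25vec \<Rightarrow> gf25vec" where
  "kernel_dir (a, b, c) =
    (if a = gf_one then (gf_neg c, gf_zero, gf_one)
     else if b = gf_one then (gf_zero, gf_neg c, gf_one)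
     else (gf_zero, gf_one, gf_zero))"

definition line_point :: "gf25vec \<Rightarrow> gf25 \<Rightarrow> gf25vec" where
  "line_point m s = gf3_add (kernel_base m) (gf3_smul s (kernel_dir m))"

context field25
begin

lemma gf3_val_add: "gf3_val r (gf3_add u v) = vadd (gf3_val r u) (gf3_val r v)"
  by (cases u rule: prod_cases3; cases v rule: prod_cases3) (simp add: gf_val_add)

lemma gf3_val_smul: "gf3_val r (gf3_smul s v) = vsc (gf_val r s) (gf3_val r v)"
  by (cases v rule: prod_cases3) (simp add: gf_val_mul)

lemma gf3_val_eq_0_iff: "gf3_val r v = (0, 0, 0) \<longleftrightarrow> v = (gf_zero, gf_zero, gf_zero)"
  by (cases v rule: prod_cases3) simp

lemma gf3_val_surj: "\<exists>v. gf3_val r v = y"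
  using gf_val_surj by (cases y rule: prod_cases3) (metis gf3_val.simps)

lemma proj_pt_gf3_val_normal_rep:
  assumes "v \<noteq> (gf_zero, gf_zero, gf_zero)"
  shows "proj_pt (gf3_val r (normal_rep v)) = proj_pt (gf3_val r v)"
proof -
  obtain a b c where v: "v = (a, b, c)" by (cases v rule: prod_cases3)
  have "\<exists>k. k \<noteq> 0 \<and> gf3_val r (normal_rep v) = vsc k (gf3_val r v)"
  proof (cases "a = gf_zero")
    case False
    then show ?thesis
      by (intro exI[of _ "inverse (gf_val r a)"]) (simp add: v gf_val_mul gf_val_inv)
  next
    case a: True
    show ?thesis
    proof (cases "b = gf_zero")
      case False
      then show ?thesis
        using a by (intro exI[of _ "inverse (gf_val r b)"]) (simp add: v gf_val_mul gf_val_inv)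
    next
      case True
      then show ?thesis
        using a assms by (intro exI[of _ "inverse (gf_val r c)"]) (simp add: v)
    qed
  qed
  then show ?thesis using proj_pt_vsc by metis
qed

lemma is_normal_rep_eqI:
  assumes "is_normal_rep u" "is_normal_rep v" "proj_pt (gf3_val r u) = proj_pt (gf3_val r v)"
  shows "u = v"
proof -
  obtain k where k: "gf3_val r u = vsc k (gf3_val r v)"
    using proj_pt_eqD[OF assms(3)] by blast
  obtain a b c where u: "u = (a, b, c)" by (cases u rule: prod_cases3)
  obtain x y z where v: "v = (x, y, z)" by (cases v rule: prod_cases3)
  have "gf_val r a = k * gf_val r x" "gf_val r b = k * gf_val r y" "gf_val r c = k * gf_val r z"
    using k by (simp_all add: u v)
  then show ?thesis
    using assms(1,2) by (auto simp: u v)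
qed

lemma kernel_span:
  assumes m: "is_normal_rep m" and orth: "dot3 (gf3_val r m) x = 0"
  shows "\<exists>a b. x = vadd (vsc a (gf3_val r (kernel_base m))) (vsc b (gf3_val r (kernel_dir m)))"
proof -
  obtain m1 m2 m3 where m_comps: "m = (m1, m2, m3)" by (cases m rule: prod_cases3)
  obtain x1 x2 x3 where x: "x = (x1, x2, x3)" by (cases x rule: prod_cases3)
  consider "m1 = gf_one" | "m1 = gf_zero" "m2 = gf_one" | "m1 = gf_zero" "m2 = gf_zero" "m3 = gf_one"
    using m m_comps by auto
  then show ?thesis
  proof cases
    case 1
    then have "x1 + (gf_val r m2 * x2 + gf_val r m3 * x3) = 0"
      using orth by (simp add: m_comps x add.assoc)
    then have "x1 = - (gf_val r m2 * x2 + gf_val r m3 * x3)"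
      by (rule eq_neg_iff_add_eq_0[THEN iffD2])
    then show ?thesis
      using 1 by (intro exI[of _ x2] exI[of _ x3]) (simp add: m_comps x gf_val_neg algebra_simps)
  next
    case 2
    then have "x2 = - (gf_val r m3 * x3)"
      using orth by (simp add: m_comps x eq_neg_iff_add_eq_0)
    then show ?thesis
      using 2 by (intro exI[of _ x1] exI[of _ x3]) (simp add: m_comps x gf_val_neg)
  next
    case 3
    then show ?thesis
      using orth by (intro exI[of _ x1] exI[of _ x2]) (simp add: m_comps x)
  qed
qed

lemma kernel_points:
  assumes m: "is_normal_rep m" and orth: "dot3 (gf3_val r m) x = 0" and x: "x \<noteq> (0, 0, 0)"
  shows "(\<exists>s. proj_pt x = proj_pt (gf3_val r (line_point m s)))
    \<or> proj_pt x = proj_pt (gf3_val r (kernel_dir m))"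
proof -
  obtain a b where ab: "x = vadd (vsc a (gf3_val r (kernel_base m))) (vsc b (gf3_val r (kernel_dir m)))"
    using kernel_span[OF m orth] by blast
  show ?thesis
  proof (cases "a = 0")
    case False
    obtain s where "gf_val r s = b / a" using gf_val_surj by blast
    then have "x = vsc a (gf3_val r (line_point m s))"
      using ab False by (simp add: line_point_def gf3_val_add gf3_val_smul vadd_vsc_eq_vsc)
    then show ?thesis using False proj_pt_vsc by blast
  next
    case True
    then have "x = vsc b (gf3_val r (kernel_dir m))"
      using ab by (cases "gf3_val r (kernel_dir m)" rule: prod_cases3) simp
    then show ?thesis using x proj_pt_vsc vsc_zero by metis
  qed
qed

end

definition f5_all :: "f5 list" where
  "f5_all = [Z0, Z1, Z2, Z3, Z4]"

definition gf_all :: "gf25 list" where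
  "gf_all = List.product f5_all f5_all"

lemma set_f5_all: "set f5_all = UNIV"
  by (simp add: f5_all_def UNIV_f5)

lemma set_gf_all: "set gf_all = UNIV"
  by (simp add: gf_all_def set_f5_all)

lemma distinct_gf_all: "distinct gf_all"
  by (simp add: gf_all_def f5_all_def)

lemma card_set_filter_distinct: "distinct xs \<Longrightarrow> card {x \<in> set xs. P x} = length (filter P xs)"
  using distinct_card[of "filter P xs"] by simp

lemma card_Collect_gf25: "card {x :: gf25. P x} = length (filter P gf_all)"
  using card_set_filter_distinct[OF distinct_gf_all] by (simp add: set_gf_all)

section \<open>The arc\<close>

fun arc_row :: "gf25 \<Rightarrow> gf25 list" where
  "arc_row (Z0, Z0) =
    [(Z0, Z0), (Z1, Z0), (Z2, Z0), (Z3, Z0), (Z4, Z0), (Z0, Z1),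
     (Z1, Z1), (Z1, Z2), (Z4, Z2), (Z0, Z3), (Z2, Z3), (Z3, Z3),
     (Z4, Z3), (Z0, Z4), (Z1, Z4), (Z2, Z4), (Z4, Z4)]"
| "arc_row (Z1, Z0) =
    [(Z0, Z0), (Z1, Z0), (Z2, Z0), (Z3, Z0), (Z4, Z0), (Z1, Z1),
     (Z2, Z1), (Z4, Z1), (Z0, Z2), (Z2, Z2), (Z4, Z2), (Z0, Z3),
     (Z2, Z3), (Z0, Z4), (Z2, Z4), (Z3, Z4), (Z4, Z4)]"
| "arc_row (Z2, Z0) =
    [(Z0, Z0), (Z1, Z0), (Z2, Z0), (Z3, Z0), (Z4, Z0), (Z0, Z1),
     (Z1, Z1), (Z3, Z1), (Z2, Z2), (Z3, Z2), (Z4, Z2), (Z1, Z3),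
     (Z3, Z3), (Z0, Z4), (Z1, Z4), (Z2, Z4), (Z3, Z4)]"
| "arc_row (Z3, Z0) =
    [(Z0, Z0), (Z1, Z0), (Z3, Z0), (Z1, Z1), (Z2, Z1), (Z3, Z1),
     (Z0, Z2), (Z1, Z2), (Z2, Z2), (Z3, Z2), (Z3, Z3), (Z4, Z3),
     (Z0, Z4), (Z1, Z4), (Z2, Z4), (Z4, Z4)]"
| "arc_row (Z4, Z0) =
    [(Z1, Z0), (Z2, Z0), (Z4, Z0), (Z2, Z1), (Z3, Z1), (Z4, Z1),
     (Z0, Z2), (Z4, Z2), (Z0, Z3), (Z1, Z3), (Z2, Z3), (Z0, Z4),
     (Z1, Z4), (Z2, Z4), (Z3, Z4), (Z4, Z4)]"
| "arc_row (Z0, Z1) =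
    [(Z4, Z0), (Z0, Z1), (Z3, Z1), (Z4, Z1), (Z0, Z2), (Z1, Z2),
     (Z3, Z2), (Z4, Z2), (Z0, Z3), (Z1, Z3), (Z2, Z3), (Z4, Z3),
     (Z0, Z4), (Z1, Z4), (Z2, Z4), (Z3, Z4), (Z4, Z4)]"
| "arc_row (Z1, Z1) =
    [(Z0, Z0), (Z1, Z0), (Z2, Z0), (Z4, Z0), (Z0, Z1), (Z2, Z1),
     (Z1, Z2), (Z2, Z2), (Z4, Z2), (Z1, Z3), (Z3, Z3), (Z0, Z4),
     (Z1, Z4), (Z2, Z4), (Z3, Z4), (Z4, Z4)]"
| "arc_row (Z2, Z1) =
    [(Z2, Z0), (Z3, Z0), (Z4, Z0), (Z3, Z1), (Z4, Z1), (Z0, Z2),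
     (Z2, Z2), (Z3, Z2), (Z0, Z3), (Z1, Z3), (Z3, Z3), (Z4, Z3),
     (Z0, Z4), (Z1, Z4), (Z2, Z4), (Z4, Z4)]"
| "arc_row (Z3, Z1) =
    [(Z0, Z0), (Z1, Z0), (Z3, Z0), (Z2, Z1), (Z3, Z1), (Z1, Z2),
     (Z2, Z2), (Z4, Z2), (Z0, Z3), (Z1, Z3), (Z2, Z3), (Z3, Z3),
     (Z1, Z4), (Z2, Z4), (Z4, Z4)]"
| "arc_row (Z4, Z1) =
    [(Z0, Z0), (Z1, Z0), (Z3, Z0), (Z0, Z1), (Z1, Z1), (Z2, Z1),
     (Z4, Z1), (Z0, Z2), (Z2, Z2), (Z3, Z2), (Z0, Z3), (Z2, Z3),
     (Z3, Z4), (Z4, Z4)]"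
| "arc_row (Z0, Z2) =
    [(Z0, Z0), (Z1, Z0), (Z4, Z0), (Z0, Z1), (Z1, Z1), (Z2, Z1),
     (Z3, Z1), (Z4, Z1), (Z0, Z2), (Z2, Z2), (Z3, Z2), (Z4, Z2),
     (Z3, Z3), (Z4, Z3), (Z0, Z4), (Z2, Z4), (Z3, Z4)]"
| "arc_row (Z1, Z2) =
    [(Z2, Z0), (Z0, Z1), (Z1, Z1), (Z2, Z1), (Z3, Z1), (Z4, Z1),
     (Z0, Z2), (Z1, Z2), (Z2, Z2), (Z4, Z2), (Z0, Z3), (Z1, Z3),
     (Z2, Z3), (Z4, Z3), (Z1, Z4), (Z2, Z4), (Z3, Z4)]"
| "arc_row (Z2, Z2) =
    [(Z1, Z0), (Z4, Z0), (Z0, Z1), (Z1, Z1), (Z2, Z1), (Z3, Z1),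
     (Z4, Z1), (Z1, Z2), (Z3, Z2), (Z0, Z3), (Z2, Z3), (Z3, Z3),
     (Z0, Z4), (Z1, Z4), (Z3, Z4), (Z4, Z4)]"
| "arc_row (Z3, Z2) =
    [(Z0, Z0), (Z1, Z0), (Z2, Z0), (Z3, Z0), (Z0, Z1), (Z2, Z1),
     (Z3, Z1), (Z4, Z1), (Z0, Z2), (Z3, Z2), (Z4, Z2), (Z2, Z3),
     (Z3, Z3), (Z1, Z4), (Z3, Z4), (Z4, Z4)]"
| "arc_row (Z4, Z2) =
    [(Z0, Z0), (Z2, Z0), (Z4, Z0), (Z1, Z1), (Z2, Z1), (Z0, Z2),
     (Z1, Z2), (Z2, Z2), (Z3, Z2), (Z0, Z3), (Z3, Z3), (Z4, Z3),
     (Z0, Z4), (Z1, Z4), (Z2, Z4), (Z4, Z4)]"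
| "arc_row (Z0, Z3) =
    [(Z1, Z0), (Z2, Z0), (Z3, Z0), (Z4, Z0), (Z1, Z1), (Z2, Z1),
     (Z3, Z1), (Z0, Z2), (Z2, Z2), (Z4, Z2), (Z1, Z3), (Z2, Z3),
     (Z3, Z3), (Z4, Z3), (Z3, Z4), (Z4, Z4)]"
| "arc_row (Z1, Z3) =
    [(Z0, Z0), (Z1, Z0), (Z2, Z0), (Z3, Z0), (Z4, Z0), (Z0, Z1),
     (Z1, Z1), (Z2, Z1), (Z1, Z2), (Z3, Z2), (Z0, Z3), (Z1, Z3),
     (Z2, Z3), (Z4, Z3), (Z0, Z4), (Z2, Z4), (Z4, Z4)]"
| "arc_row (Z2, Z3) =
    [(Z0, Z0), (Z2, Z0), (Z3, Z0), (Z4, Z0), (Z0, Z1), (Z2, Z1),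
     (Z3, Z1), (Z4, Z1), (Z0, Z2), (Z1, Z2), (Z3, Z2), (Z4, Z2),
     (Z1, Z3), (Z2, Z3), (Z3, Z3), (Z4, Z3), (Z2, Z4)]"
| "arc_row (Z3, Z3) =
    [(Z0, Z0), (Z1, Z0), (Z2, Z0), (Z3, Z0), (Z4, Z0), (Z0, Z1),
     (Z2, Z1), (Z3, Z1), (Z1, Z2), (Z3, Z2), (Z0, Z3), (Z1, Z3),
     (Z2, Z3), (Z3, Z3), (Z4, Z3), (Z1, Z4)]"
| "arc_row (Z4, Z3) =
    [(Z0, Z0), (Z2, Z0), (Z3, Z0), (Z0, Z1), (Z1, Z1), (Z3, Z1),
     (Z4, Z1), (Z0, Z2), (Z2, Z2), (Z4, Z2), (Z0, Z3), (Z2, Z3),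
     (Z4, Z3), (Z0, Z4)]"
| "arc_row (Z0, Z4) =
    [(Z0, Z0), (Z3, Z0), (Z4, Z0), (Z2, Z1), (Z3, Z1), (Z4, Z1),
     (Z0, Z2), (Z2, Z2), (Z0, Z3), (Z1, Z3), (Z3, Z3), (Z4, Z3),
     (Z2, Z4)]"
| "arc_row (Z1, Z4) =
    [(Z1, Z0), (Z2, Z0), (Z0, Z1), (Z1, Z1), (Z4, Z1), (Z0, Z2),
     (Z1, Z2), (Z2, Z2), (Z3, Z2), (Z4, Z2), (Z0, Z3), (Z3, Z3),
     (Z4, Z3), (Z2, Z4), (Z4, Z4)]"
| "arc_row (Z2, Z4) =
    [(Z0, Z0), (Z1, Z0), (Z3, Z0), (Z1, Z1), (Z4, Z1), (Z0, Z2),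
     (Z1, Z2), (Z2, Z2), (Z3, Z2), (Z4, Z2), (Z1, Z3), (Z2, Z3),
     (Z3, Z3), (Z0, Z4), (Z3, Z4), (Z4, Z4)]"
| "arc_row (Z3, Z4) =
    [(Z1, Z0), (Z2, Z0), (Z4, Z0), (Z0, Z1), (Z1, Z1), (Z4, Z1),
     (Z1, Z2), (Z2, Z2), (Z3, Z2), (Z4, Z2), (Z1, Z3), (Z2, Z3),
     (Z3, Z3), (Z0, Z4), (Z1, Z4), (Z2, Z4), (Z3, Z4)]"
| "arc_row (Z4, Z4) =
    [(Z0, Z0), (Z4, Z0), (Z0, Z1), (Z1, Z1), (Z2, Z1), (Z3, Z1),
     (Z0, Z2), (Z2, Z2), (Z3, Z2), (Z4, Z2), (Z0, Z3), (Z1, Z3),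
     (Z2, Z3), (Z4, Z3), (Z0, Z4), (Z3, Z4), (Z4, Z4)]"

definition arc_row_inf :: "gf25 list" where
  "arc_row_inf =
    [(Z0, Z0), (Z0, Z1), (Z1, Z1), (Z2, Z1), (Z4, Z1), (Z0, Z2),
     (Z1, Z2), (Z4, Z2), (Z0, Z3), (Z2, Z3), (Z3, Z3), (Z0, Z4),
     (Z1, Z4), (Z2, Z4), (Z3, Z4), (Z4, Z4)]"

fun arc_rep :: "gf25vec \<Rightarrow> bool" where
  "arc_rep (a, b, c) \<longleftrightarrow>
    a = gf_one \<and> c \<in> set (arc_row b)
    \<or> a = gf_zero \<and> b = gf_one \<and> c \<in> set arc_row_inf
    \<or> a = gf_zero \<and> b = gf_zero \<and> c = gf_one"

lemma arc_rep_is_normal_rep: "arc_rep v \<Longrightarrow> is_normal_rep v"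
  by (cases v rule: prod_cases3) auto

lemma distinct_arc_row: "distinct (arc_row b)"
proof -
  have "\<forall>b \<in> set gf_all. distinct (arc_row b)"
    by (simp add: gf_all_def f5_all_def)
  then show ?thesis by (metis UNIV_I set_gf_all)
qed

lemma distinct_arc_row_inf: "distinct arc_row_inf"
  by (simp add: arc_row_inf_def)

lemma card_arc_rep_filter:
  "card {v. arc_rep v \<and> P v}
    = (\<Sum>b\<leftarrow>gf_all. length (filter (\<lambda>c. P (gf_one, b, c)) (arc_row b)))
      + length (filter (\<lambda>c. P (gf_zero, gf_one, c)) arc_row_inf)
      + (if P (gf_zero, gf_zero, gf_one) then 1 else 0)"
proof -
  let ?R1 = "(\<lambda>(b, c). (gf_one, b, c)) ` (SIGMA b:UNIV. set (filter (\<lambda>c. P (gf_one, b, c)) (arc_row b)))"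
  let ?R2 = "(\<lambda>c. (gf_zero, gf_one, c)) ` set (filter (\<lambda>c. P (gf_zero, gf_one, c)) arc_row_inf)"
  let ?R3 = "if P (gf_zero, gf_zero, gf_one) then {(gf_zero, gf_zero, gf_one)} else {}"
  have "{v. arc_rep v \<and> P v} = ?R1 \<union> ?R2 \<union> ?R3"
    by auto
  moreover have "card ?R1 = (\<Sum>b\<leftarrow>gf_all. length (filter (\<lambda>c. P (gf_one, b, c)) (arc_row b)))"
  proof -
    have "card ?R1 = (\<Sum>b\<in>UNIV. card (set (filter (\<lambda>c. P (gf_one, b, c)) (arc_row b))))"
      by (subst card_image) (auto simp: inj_on_def)
    also have "\<dots> = (\<Sum>b\<in>set gf_all. length (filter (\<lambda>c. P (gf_one, b, c)) (arc_row b)))"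
      by (simp add: set_gf_all card_set_filter_distinct distinct_arc_row)
    also have "\<dots> = (\<Sum>b\<leftarrow>gf_all. length (filter (\<lambda>c. P (gf_one, b, c)) (arc_row b)))"
      by (simp add: sum_list_distinct_conv_sum_set distinct_gf_all)
    finally show ?thesis .
  qed
  moreover have "card ?R2 = length (filter (\<lambda>c. P (gf_zero, gf_one, c)) arc_row_inf)"
    by (subst card_image) (simp_all add: inj_on_def card_set_filter_distinct distinct_arc_row_inf)
  moreover have "card ?R3 = (if P (gf_zero, gf_zero, gf_one) then 1 else 0)"
    by simp
  moreover have "card (?R1 \<union> ?R2 \<union> ?R3) = card ?R1 + card ?R2 + card ?R3"
  proof -
    have "card (?R1 \<union> ?R2) = card ?R1 + card ?R2"
      by (rule card_Un_disjoint) auto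
    then show ?thesis
      by (subst card_Un_disjoint) auto
  qed
  ultimately show ?thesis
    by simp
qed

lemma card_arc_rep: "card {v. arc_rep v} = 418"
  using card_arc_rep_filter[where P = "\<lambda>_. True"]
  by (simp add: gf_all_def f5_all_def arc_row_inf_def)

lemma card_arc_rep_z_eq_0: "card {v. arc_rep v \<and> snd (snd v) = gf_zero} = 18"
  by (simp add: card_arc_rep_filter gf_all_def f5_all_def arc_row_inf_def)

definition line_count :: "gf25vec \<Rightarrow> nat" where
  "line_count m = length (filter (\<lambda>s. arc_rep (normal_rep (line_point m s))) gf_all)
    + (if arc_rep (normal_rep (kernel_dir m)) then 1 else 0)"

lemma line_count_le_18:
  assumes "is_normal_rep m"
  shows "line_count m \<le> 18"
proof -
  have "list_all (\<lambda>b. list_all (\<lambda>c. line_count (gf_one, b, c) \<le> 18) gf_all) gf_all"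
    by code_simp
  moreover have "list_all (\<lambda>c. line_count (gf_zero, gf_one, c) \<le> 18) gf_all"
    by code_simp
  moreover have "line_count (gf_zero, gf_zero, gf_one) \<le> 18"
    by code_simp
  ultimately show ?thesis
    using assms by (cases m rule: prod_cases3) (auto simp: list_all_iff set_gf_all)
qed

context field25
begin

definition arc_points :: "('a \<times> 'a \<times> 'a) set set" where
  "arc_points = (\<lambda>v. proj_pt (gf3_val r v)) ` {v. arc_rep v}"

lemma gf3_val_is_normal_rep_nonzero: "is_normal_rep v \<Longrightarrow> gf3_val r v \<noteq> (0, 0, 0)"
  by (cases v rule: prod_cases3) (auto simp: gf3_val_eq_0_iff)

lemma inj_on_arc_points: "inj_on (\<lambda>v. proj_pt (gf3_val r v)) {v. arc_rep v}"
  by (rule inj_onI) (simp add: is_normal_rep_eqI arc_rep_is_normal_rep)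

lemma arc_rep_normal_rep_if_mem_arc_points:
  assumes "proj_pt (gf3_val r w) \<in> arc_points"
  shows "arc_rep (normal_rep w)"
proof -
  obtain v where v: "arc_rep v" and eq: "proj_pt (gf3_val r w) = proj_pt (gf3_val r v)"
    using assms unfolding arc_points_def by blast
  have "w \<noteq> (gf_zero, gf_zero, gf_zero)"
  proof
    assume "w = (gf_zero, gf_zero, gf_zero)"
    moreover obtain c where "gf3_val r v = vsc c (gf3_val r w)"
      using proj_pt_eqD eq by metis
    ultimately show False
      using gf3_val_is_normal_rep_nonzero[OF arc_rep_is_normal_rep[OF v]] by (simp add: gf3_val_eq_0_iff)
  qed
  then have "proj_pt (gf3_val r (normal_rep w)) = proj_pt (gf3_val r v)"
    using eq proj_pt_gf3_val_normal_rep by simp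
  then have "normal_rep w = v"
    by (rule is_normal_rep_eqI[OF is_normal_rep_normal_rep arc_rep_is_normal_rep[OF v]])
  then show ?thesis using v by simp
qed

lemma arc_points_on_line_subset:
  assumes m: "is_normal_rep m" and L: "\<forall>x. x \<in> L \<longleftrightarrow> dot3 (gf3_val r m) x = 0"
  shows "{P \<in> arc_points. P \<subseteq> L}
    \<subseteq> (\<lambda>s. proj_pt (gf3_val r (line_point m s))) ` {s. arc_rep (normal_rep (line_point m s))}
      \<union> (if arc_rep (normal_rep (kernel_dir m)) then {proj_pt (gf3_val r (kernel_dir m))} else {})"
proof
  fix P assume P: "P \<in> {P \<in> arc_points. P \<subseteq> L}"
  then obtain v where v: "arc_rep v" "P = proj_pt (gf3_val r v)"
    unfolding arc_points_def by blast
  have "dot3 (gf3_val r m) (gf3_val r v) = 0"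
    using P v(2) proj_pt_subset_iff[OF L] by blast
  then have "(\<exists>s. P = proj_pt (gf3_val r (line_point m s))) \<or> P = proj_pt (gf3_val r (kernel_dir m))"
    using kernel_points[OF m] gf3_val_is_normal_rep_nonzero[OF arc_rep_is_normal_rep[OF v(1)]] v(2) by blast
  then show "P \<in> (\<lambda>s. proj_pt (gf3_val r (line_point m s))) ` {s. arc_rep (normal_rep (line_point m s))}
      \<union> (if arc_rep (normal_rep (kernel_dir m)) then {proj_pt (gf3_val r (kernel_dir m))} else {})"
  proof (elim disjE exE)
    fix s assume s: "P = proj_pt (gf3_val r (line_point m s))"
    then have "arc_rep (normal_rep (line_point m s))"
      using P arc_rep_normal_rep_if_mem_arc_points by blast
    then show ?thesis using s by blast
  next
    assume k: "P = proj_pt (gf3_val r (kernel_dir m))"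
    then have "arc_rep (normal_rep (kernel_dir m))"
      using P arc_rep_normal_rep_if_mem_arc_points by blast
    then show ?thesis using k by simp
  qed
qed

lemma card_arc_points_on_normal_le:
  assumes "is_normal_rep m" and "\<forall>x. x \<in> L \<longleftrightarrow> dot3 (gf3_val r m) x = 0"
  shows "card {P \<in> arc_points. P \<subseteq> L} \<le> line_count m"
proof -
  let ?S = "{s. arc_rep (normal_rep (line_point m s))}"
  let ?T = "if arc_rep (normal_rep (kernel_dir m)) then {proj_pt (gf3_val r (kernel_dir m))} else {}"
  have "card {P \<in> arc_points. P \<subseteq> L} \<le> card ((\<lambda>s. proj_pt (gf3_val r (line_point m s))) ` ?S \<union> ?T)"
    using arc_points_on_line_subset[OF assms] by (intro card_mono) auto
  also have "\<dots> \<le> card ?S + card ?T"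
    by (rule order_trans[OF card_Un_le add_right_mono[OF card_image_le]]) simp
  also have "\<dots> = line_count m"
    by (simp add: line_count_def card_Collect_gf25)
  finally show ?thesis .
qed

lemma card_arc_points_on_line_le:
  assumes "pg_line L"
  shows "card {P \<in> arc_points. P \<subseteq> L} \<le> 18"
proof -
  obtain n where n0: "n \<noteq> (0, 0, 0)" and Ln: "\<forall>x. x \<in> L \<longleftrightarrow> dot3 n x = 0"
    using pg_line_normal[OF assms] by blast
  obtain y where y: "gf3_val r y = n"
    using gf3_val_surj by blast
  have y0: "y \<noteq> (gf_zero, gf_zero, gf_zero)"
    using y n0 gf3_val_eq_0_iff by blast
  obtain k where k: "gf3_val r (normal_rep y) = vsc k n"
    using proj_pt_eqD[OF proj_pt_gf3_val_normal_rep[OF y0]] y by blast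
  then have "k \<noteq> 0"
    using gf3_val_is_normal_rep_nonzero[OF is_normal_rep_normal_rep] by (metis vsc_zero)
  then have "\<forall>x. x \<in> L \<longleftrightarrow> dot3 (gf3_val r (normal_rep y)) x = 0"
    using Ln k by (simp add: dot3_vsc_left)
  then have "card {P \<in> arc_points. P \<subseteq> L} \<le> line_count (normal_rep y)"
    by (rule card_arc_points_on_normal_le[OF is_normal_rep_normal_rep])
  also have "\<dots> \<le> 18"
    by (rule line_count_le_18[OF is_normal_rep_normal_rep])
  finally show ?thesis .
qed

lemma card_arc_points_on_z_eq_0: "card {P \<in> arc_points. P \<subseteq> {x. snd (snd x) = 0}} = 18"
proof -
  have z: "\<forall>x. x \<in> {x :: 'a \<times> 'a \<times> 'a. snd (snd x) = 0} \<longleftrightarrow> dot3 (0, 0, 1) x = 0"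
    by auto
  have "proj_pt (gf3_val r v) \<subseteq> {x. snd (snd x) = 0} \<longleftrightarrow> snd (snd v) = gf_zero" for v
    using proj_pt_subset_iff[OF z] by (cases v rule: prod_cases3) simp
  then have "{P \<in> arc_points. P \<subseteq> {x. snd (snd x) = 0}}
      = (\<lambda>v. proj_pt (gf3_val r v)) ` {v. arc_rep v \<and> snd (snd v) = gf_zero}"
    unfolding arc_points_def by blast
  also have "card \<dots> = 18"
  proof -
    have "inj_on (\<lambda>v. proj_pt (gf3_val r v)) {v. arc_rep v \<and> snd (snd v) = gf_zero}"
      by (rule inj_on_subset[OF inj_on_arc_points]) blast
    then show ?thesis
      using card_arc_rep_z_eq_0 by (simp add: card_image)
  qed
  finally show ?thesis .
qed

lemma is_arc_arc_points: "is_arc 418 18 arc_points"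
  unfolding is_arc_def
proof (intro conjI)
  show "finite arc_points"
    by simp
  have "pg_point (proj_pt (gf3_val r v))" if "arc_rep v" for v
    using that by (intro pg_point_proj_pt gf3_val_is_normal_rep_nonzero arc_rep_is_normal_rep)
  then show "\<forall>P \<in> arc_points. pg_point P"
    unfolding arc_points_def by blast
  show "card arc_points = 418"
    using card_image[OF inj_on_arc_points] card_arc_rep by (simp add: arc_points_def)
  show "\<forall>L. pg_line L \<longrightarrow> card {P \<in> arc_points. P \<subseteq> L} \<le> 18"
    using card_arc_points_on_line_le by blast
  show "\<exists>L. pg_line L \<and> card {P \<in> arc_points. P \<subseteq> L} = 18"
    using pg_line_z_eq_0 card_arc_points_on_z_eq_0 by blast
qed

end

theorem mainTheorem12:
  assumes "CARD('a) = 25"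
  shows "(\<exists>B :: ('a::{field, finite} \<times> 'a \<times> 'a) set set. is_arc 418 18 B)
         \<and> 418 \<le> m_arc TYPE('a) 18"
proof -
  obtain r :: 'a where "r * r = 2"
    using exists_sqrt_2[OF assms] by blast
  then interpret field25 r
    using assms by unfold_locales
  show ?thesis
    using is_arc_arc_points is_arc_le_m_arc by blast
qed

end
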